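(* Let $V$ be a vertex algebra over a field $\mathbb{F}$ of characteristic $p$, and let $(W,Y_W)$ be a $V$-module. Write $Y_W(a,x)=\sum_{n\in\mathbb{Z}}a_nx^{-n-1}$. Let $a\in V$ be such that on $W$ the operators $a_n$ ($n\in\mathbb{N}$) mutually commute and the operators $a_{-n}$ ($n\in\mathbb{Z}_+$) mutually commute. Then for every $n\in\mathbb{Z}_+$, $$Y_W\big((a_{-n})^p\mathbf 1,x\big)=\sum_{j\ge0}\binom{n+j-1}{j}a_{-n-j}^p\,x^{jp}+\sum_{j\ge0}(-1)^{1-n}\binom{n+j-1}{j}a_j^p\,x^{-p(n+j)}.$$ Here $(a_{-n})^p\mathbf 1\in V$ is computed with the vertex operators of $V$, and the right-hand side uses the operators on $W$. In particular, $$Y_W\big((a_{-1})^p\mathbf 1,x\big)=\sum_{j\in\mathbb{Z}}a_j^p\,x^{-p(j+1)}.$$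
   Context: Let $p$ be a prime and $\mathbb{F}$ a field of characteristic $p$. Integers, and binomial coefficients $\binom{n}{k}=\frac{n(n-1)\cdots(n-k+1)}{k!}$ for $n\in\mathbb{Z}$, $k\in\mathbb{N}$, are viewed as elements of the prime subfield of $\mathbb{F}$. We write $\mathbb{Z}_+$ for the positive integers. <b>Formal calculus.</b> For every $n\in\mathbb{Z}$ set $(x+y)^n=\sum_{k\ge0}\binom{n}{k}x^{n-k}y^k$, and let $\delta(x)=\sum_{n\in\mathbb{Z}}x^n$. <b>Vertex algebras.</b> A vertex algebra over $\mathbb{F}$ is a vector space $V$ with a vector $\mathbf 1$ and a linear map $$Y(\cdot,x):V\to(\mathrm{End}\,V)[[x,x^{-1}]],\qquad v\mapsto Y(v,x)=\sum_{n\in\mathbb{Z}}v_nx^{-n-1},$$ satisfying the following conditions for all $u,v\in V$: <ul> <li>$u_nv=0$ for $n\gg0$;</li> <li>$Y(\mathbf 1,x)=\mathrm{id}_V$;</li> <li>$Y(v,x)\mathbf 1\in V[[x]]$ and its constant term is $v$;</li> <li>the Jacobi identity $$x_0^{-1}\delta\!\left(\tfrac{x_1-x_2}{x_0}\right)Y(u,x_1)Y(v,x_2)-x_0^{-1}\delta\!\left(\tfrac{x_2-x_1}{-x_0}\right)Y(v,x_2)Y(u,x_1)=x_2^{-1}\delta\!\left(\tfrac{x_1-x_0}{x_2}\right)Y(Y(u,x_0)v,x_2).$$</li> </ul> A $V$-module is a vector space $W$ with a linear map $Y_W(\cdot,x):V\to(\mathrm{End}\,W)[[x,x^{-1}]]$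 satisfying truncation ($u_nw=0$ for $n\gg0$), $Y_W(\mathbf 1,x)=\mathrm{id}_W$, and the same Jacobi identity with $Y_W$ in place of $Y$ in the three products of vertex operators. *)

theory Defs
  imports Complex_Main "HOL-Computational_Algebra.Primes"
begin

text \<open>Binomial coefficient with integer upper argument, viewed as an integer:
  binom n k = n(n-1)...(n-k+1)/k!  (exact division).  It is mapped into a field via of_int.\<close>
definition ibinom :: "int \<Rightarrow> nat \<Rightarrow> int" where
  "ibinom n k = (\<Prod>i<k. n - int i) div fact k"

definition fin_sum :: "(nat \<Rightarrow> 'a::comm_monoid_add) \<Rightarrow> 'a" where
  "fin_sum f = (\<Sum>i | f i \<noteq> 0. f i)"

text \<open>Coefficient of x^m in the formal series  sum_j c_j x^(e j).\<close>
definition series_coeff :: "('i \<Rightarrow> int) \<Rightarrow> ('i \<Rightarrow> 'a::comm_monoid_add) \<Rightarrow> int \<Rightarrow> 'a" where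
  "series_coeff e c m = (\<Sum>j | e j = m. c j)"

text \<open>Vertex algebra over a field 'f, given in components: Y u n v = u_n v,
  so Y(u,x) = sum_n u_n x^(-n-1).  The Jacobi identity is stated through its
  coefficient of x0^(-l-1) x1^(-m-1) x2^(-n-1) (applied to a vector w); every
  occurring sum over i is finite by the truncation condition.\<close>
locale vertex_algebra =
  fixes smul :: "'f::field \<Rightarrow> 'v::ab_group_add \<Rightarrow> 'v"
    and vac :: 'v
    and Y :: "'v \<Rightarrow> int \<Rightarrow> 'v \<Rightarrow> 'v"
  assumes vs: "vector_space smul"
    and Y_linear_left: "\<And>n v. Vector_Spaces.linear smul smul (\<lambda>u. Y u n v)"
    and Y_linear_right: "\<And>u n. Vector_Spaces.linear smul smul (Y u n)"
    and truncation: "\<And>u v. \<exists>N. \<forall>n\<ge>N. Y u n v = 0"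
    and vacuum: "\<And>n v. Y vac n v = (if n = -1 then v else 0)"
    and creation: "\<And>v n. n \<ge> 0 \<Longrightarrow> Y v n vac = 0"
    and creation_const: "\<And>v. Y v (-1) vac = v"
    and jacobi: "\<And>u v w l m n.
      fin_sum (\<lambda>i. smul ((-1)^i * of_int (ibinom l i))
          (Y u (l + m - int i) (Y v (n + int i) w)
           - smul ((-1) powi l) (Y v (l + n - int i) (Y u (m + int i) w))))
      = fin_sum (\<lambda>i. smul ((-1)^i * of_int (ibinom (int i - m - 1) i))
          (Y (Y u (l + int i) v) (m + n - int i) w))"

locale va_module = vertex_algebra smul vac Y
  for smul :: "'f::field \<Rightarrow> 'v::ab_group_add \<Rightarrow> 'v" and vac Y +
  fixes smulW :: "'f \<Rightarrow> 'w::ab_group_add \<Rightarrow> 'w"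
    and YW :: "'v \<Rightarrow> int \<Rightarrow> 'w \<Rightarrow> 'w"
  assumes vsW: "vector_space smulW"
    and YW_linear_left: "\<And>n w. Vector_Spaces.linear smul smulW (\<lambda>u. YW u n w)"
    and YW_linear_right: "\<And>u n. Vector_Spaces.linear smulW smulW (YW u n)"
    and truncationW: "\<And>u w. \<exists>N. \<forall>n\<ge>N. YW u n w = 0"
    and vacuumW: "\<And>n w. YW vac n w = (if n = -1 then w else 0)"
    and jacobiW: "\<And>u v w l m n.
      fin_sum (\<lambda>i. smulW ((-1)^i * of_int (ibinom l i))
          (YW u (l + m - int i) (YW v (n + int i) w)
           - smulW ((-1) powi l) (YW v (l + n - int i) (YW u (m + int i) w))))
      = fin_sum (\<lambda>i. smulW ((-1)^i * of_int (ibinom (int i - m - 1) i))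
          (YW (Y u (l + int i) v) (m + n - int i) w))"

end

theory Submission
  imports Defs "HOL-Library.Function_Algebras"
begin

text \<open>For \<open>n \<ge> 1\<close> the Jacobi identity writes the field \<open>Y_W(a_{-n} b, x)\<close> as \<open>(L + R) Y_W(b, x)\<close>,
  where \<open>L\<close> multiplies from the left by the modes \<open>a_{-n-i}\<close> and \<open>R\<close> from the right by the
  modes \<open>a_i\<close> (\<open>i \<ge> 0\<close>), both weighted by binomial coefficients. Acting on opposite sides,
  \<open>L\<close> and \<open>R\<close> commute, so in characteristic \<open>p\<close> we get \<open>(L + R)^p = L^p + R^p\<close>, and applying
  this to \<open>Y_W(1, x) = id\<close> computes \<open>Y_W((a_{-n})^p 1, x)\<close>. On coefficients, \<open>L\<close> and \<open>R\<close> are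
  sums of shift operators, one per mode, which commute by hypothesis; a second use of the
  Frobenius identity keeps only the \<open>p\<close>-th powers of single modes, and the binomial
  coefficients are fixed by Frobenius on the prime field.\<close>

section \<open>The Frobenius identity for commuting additive maps\<close>

definition nsmul :: "nat \<Rightarrow> 'a::comm_monoid_add \<Rightarrow> 'a" where
  "nsmul k v = (\<Sum>i<k. v)"

lemma nsmul_0 [simp]: "nsmul 0 v = 0"
  by (simp add: nsmul_def)

lemma nsmul_Suc: "nsmul (Suc k) v = v + nsmul k v"
  by (simp add: nsmul_def add.commute)

lemma nsmul_Suc_0 [simp]: "nsmul (Suc 0) v = v"
  by (simp add: nsmul_def)

lemma nsmul_add: "nsmul (k + l) v = nsmul k v + nsmul l v"
  by (induct k) (simp_all add: nsmul_Suc add.assoc)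

lemma nsmul_mult: "nsmul (k * l) v = nsmul k (nsmul l v)"
  by (induct k) (simp_all add: nsmul_Suc nsmul_add)

lemma sum_fun_apply: "sum f A x = (\<Sum>i\<in>A. f i x)"
  by (induct A rule: infinite_finite_induct) auto

lemma nsmul_fun_apply: "nsmul k f x = nsmul k (f x)"
  by (simp add: nsmul_def sum_fun_apply)

lemma sum_nsmul_pascal:
  "(\<Sum>k\<le>s. nsmul (s choose k) (T (Suc k))) + (\<Sum>k\<le>s. nsmul (s choose k) (T k))
     = (\<Sum>k\<le>Suc s. nsmul (Suc s choose k) (T k))"
proof -
  have "(\<Sum>k\<le>Suc s. nsmul (Suc s choose k) (T k))
      = T 0 + (\<Sum>k\<le>s. nsmul (s choose k) (T (Suc k))) + (\<Sum>k\<le>s. nsmul (s choose Suc k) (T (Suc k)))"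
    by (subst sum.atMost_Suc_shift) (simp add: nsmul_add sum.distrib add.assoc)
  moreover have "(\<Sum>k\<le>s. nsmul (s choose k) (T k)) = T 0 + (\<Sum>k<s. nsmul (s choose Suc k) (T (Suc k)))"
    by (subst sum.atMost_shift) simp
  moreover have "(\<Sum>k<s. nsmul (s choose Suc k) (T (Suc k))) = (\<Sum>k\<le>s. nsmul (s choose Suc k) (T (Suc k)))"
    by (simp add: lessThan_Suc_atMost[symmetric] binomial_eq_0)
  ultimately show ?thesis
    by (simp add: ac_simps)
qed

locale additive_on =
  fixes S :: "'a::ab_group_add set" and X :: "'a \<Rightarrow> 'a"
  assumes zero_mem: "0 \<in> S"
    and add_mem: "\<And>u v. u \<in> S \<Longrightarrow> v \<in> S \<Longrightarrow> u + v \<in> S"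
    and maps_to: "\<And>u. u \<in> S \<Longrightarrow> X u \<in> S"
    and add: "\<And>u v. u \<in> S \<Longrightarrow> v \<in> S \<Longrightarrow> X (u + v) = X u + X v"
begin

lemma zero: "X 0 = 0"
  using add[OF zero_mem zero_mem] by simp

lemma sum_mem: "(\<And>x. x \<in> A \<Longrightarrow> f x \<in> S) \<Longrightarrow> sum f A \<in> S"
  by (induct A rule: infinite_finite_induct) (auto simp: zero_mem add_mem)

lemma nsmul_mem: "u \<in> S \<Longrightarrow> nsmul k u \<in> S"
  unfolding nsmul_def by (rule sum_mem)

lemma sum: "(\<And>x. x \<in> A \<Longrightarrow> f x \<in> S) \<Longrightarrow> X (sum f A) = (\<Sum>x\<in>A. X (f x))"
  by (induct A rule: infinite_finite_induct) (auto simp: zero add sum_mem)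

lemma nsmul: "u \<in> S \<Longrightarrow> X (nsmul k u) = nsmul k (X u)"
  unfolding nsmul_def by (rule sum)

lemma funpow_mem: "u \<in> S \<Longrightarrow> (X ^^ k) u \<in> S"
  by (induct k) (auto simp: maps_to)

end

lemma additive_on_UNIV: "additive X \<Longrightarrow> additive_on UNIV X"
  by (simp add: additive_on_def additive.add)

lemma funpow_commute_on:
  assumes "\<And>u. u \<in> S \<Longrightarrow> X (Y u) = Y (X u)" "\<And>u. u \<in> S \<Longrightarrow> Y u \<in> S" "u \<in> S"
  shows "X ((Y ^^ k) u) = (Y ^^ k) (X u)"
  using assms(3)
proof (induct k arbitrary: u)
  case (Suc k)
  then show ?case
    by (simp add: funpow_Suc_right assms(1,2) del: funpow.simps)
qed simp

lemma funpow_add_binomial: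
  assumes "additive_on S X" "additive_on S Y"
    and comm: "\<And>u. u \<in> S \<Longrightarrow> X (Y u) = Y (X u)" and g: "g \<in> S"
  shows "((\<lambda>u. X u + Y u) ^^ s) g = (\<Sum>k\<le>s. nsmul (s choose k) ((X ^^ k) ((Y ^^ (s - k)) g)))"
proof (induct s)
  case (Suc s)
  interpret X: additive_on S X by fact
  interpret Y: additive_on S Y by fact
  define T where "T k = (X ^^ k) ((Y ^^ (Suc s - k)) g)" for k
  have mem: "(X ^^ k) ((Y ^^ j) g) \<in> S" for k j
    by (intro X.funpow_mem Y.funpow_mem g)
  have X_step: "X ((X ^^ k) ((Y ^^ (s - k)) g)) = T (Suc k)" for k
    by (simp add: T_def)
  have Y_step: "Y ((X ^^ k) ((Y ^^ (s - k)) g)) = T k" if "k \<le> s" for k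
    using funpow_commute_on[of S Y X, OF comm[symmetric] X.maps_to Y.funpow_mem[OF g]] that
    by (simp add: T_def Suc_diff_le)
  have "((\<lambda>u. X u + Y u) ^^ Suc s) g
      = X (\<Sum>k\<le>s. nsmul (s choose k) ((X ^^ k) ((Y ^^ (s - k)) g)))
        + Y (\<Sum>k\<le>s. nsmul (s choose k) ((X ^^ k) ((Y ^^ (s - k)) g)))"
    using Suc by simp
  also have "\<dots> = (\<Sum>k\<le>s. nsmul (s choose k) (T (Suc k))) + (\<Sum>k\<le>s. nsmul (s choose k) (T k))"
    by (simp add: X.sum Y.sum X.nsmul Y.nsmul X.nsmul_mem mem X_step Y_step)
  also have "\<dots> = (\<Sum>k\<le>Suc s. nsmul (Suc s choose k) (T k))"
    by (rule sum_nsmul_pascal)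
  finally show ?case
    by (simp add: T_def)
qed simp

lemma funpow_add_prime:
  fixes X Y :: "'a::ab_group_add \<Rightarrow> 'a"
  assumes "additive_on S X" "additive_on S Y"
    and comm: "\<And>u. u \<in> S \<Longrightarrow> X (Y u) = Y (X u)" and g: "g \<in> S"
    and "prime p" and char: "\<And>u::'a. nsmul p u = 0"
  shows "((\<lambda>u. X u + Y u) ^^ p) g = (X ^^ p) g + (Y ^^ p) g"
proof -
  have "((\<lambda>u. X u + Y u) ^^ p) g = (\<Sum>k\<le>p. nsmul (p choose k) ((X ^^ k) ((Y ^^ (p - k)) g)))"
    by (rule funpow_add_binomial[OF assms(1-4), where s = p])
  also have "\<dots> = (\<Sum>k\<in>{0, p}. nsmul (p choose k) ((X ^^ k) ((Y ^^ (p - k)) g)))"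
  proof (intro sum.mono_neutral_right ballI)
    fix k assume "k \<in> {..p} - {0, p}"
    then have "p dvd (p choose k)"
      using \<open>prime p\<close> by (intro dvd_choose_prime) auto
    then obtain q where "p choose k = p * q" ..
    then show "nsmul (p choose k) ((X ^^ k) ((Y ^^ (p - k)) g)) = 0"
      by (simp add: nsmul_mult char)
  qed auto
  finally show ?thesis
    using prime_gt_0_nat[OF \<open>prime p\<close>] by (simp add: add.commute)
qed

lemma funpow_sum_prime:
  fixes X :: "'j \<Rightarrow> 'a::ab_group_add \<Rightarrow> 'a"
  assumes "finite J" and "\<And>j. additive (X j)"
    and comm: "\<And>i j u. X i (X j u) = X j (X i u)"
    and "prime p" and char: "\<And>u::'a. nsmul p u = 0"
  shows "((\<lambda>u. \<Sum>j\<in>J. X j u) ^^ p) g = (\<Sum>j\<in>J. (X j ^^ p) g)"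
  using \<open>finite J\<close>
proof (induct J rule: finite_induct)
  case empty
  then show ?case
    using prime_gt_0_nat[OF \<open>prime p\<close>] by (cases p) simp_all
next
  case (insert j J)
  have sum_additive: "additive (\<lambda>u. \<Sum>i\<in>J. X i u)"
    by unfold_locales (simp add: additive.add[OF assms(2)] sum.distrib)
  have "X j (\<Sum>i\<in>J. X i u) = (\<Sum>i\<in>J. X i (X j u))" for u
    by (simp add: additive.sum[OF assms(2)] comm)
  then have "((\<lambda>u. X j u + (\<Sum>i\<in>J. X i u)) ^^ p) g = (X j ^^ p) g + ((\<lambda>u. \<Sum>i\<in>J. X i u) ^^ p) g"
    by (intro funpow_add_prime[OF additive_on_UNIV additive_on_UNIV _ _ \<open>prime p\<close> char]
        assms(2) sum_additive) auto
  then show ?case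
    using insert by simp
qed

section \<open>Shift operators on coefficient sequences\<close>

text \<open>A sequence \<open>G :: nat \<Rightarrow> 'b\<close> stands for the power series \<open>\<Sum>_m G m x^m\<close>:
  \<open>shift_op s A\<close> multiplies it by \<open>x^s\<close> and applies \<open>A\<close> to every coefficient, and
  \<open>unit_seq e\<close> is the constant series \<open>e\<close>.\<close>

definition shift_op :: "nat \<Rightarrow> ('b \<Rightarrow> 'b) \<Rightarrow> (nat \<Rightarrow> 'b::zero) \<Rightarrow> nat \<Rightarrow> 'b" where
  "shift_op s A G m = (if s \<le> m then A (G (m - s)) else 0)"

definition unit_seq :: "'b \<Rightarrow> nat \<Rightarrow> 'b::zero" where
  "unit_seq e m = (if m = 0 then e else 0)"

lemma additive_funpow:
  fixes A :: "'a::ab_group_add \<Rightarrow> 'a"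
  assumes "additive A"
  shows "additive (A ^^ k)"
proof (induct k)
  case 0
  show ?case
    by unfold_locales simp
next
  case (Suc k)
  show ?case
    by unfold_locales (simp add: additive.add[OF assms] additive.add[OF Suc])
qed

lemma additive_shift_op: "additive A \<Longrightarrow> additive (shift_op s A)"
  by unfold_locales (simp add: fun_eq_iff shift_op_def additive.add)

lemma shift_op_commute:
  assumes "additive A" "additive B" "\<And>x. A (B x) = B (A x)"
  shows "shift_op s A (shift_op t B G) = shift_op t B (shift_op s A G)"
  by (auto simp: fun_eq_iff shift_op_def assms additive.zero diff_commute add.commute)

lemma funpow_shift_op:
  assumes "additive A"
  shows "(shift_op s A ^^ t) G m = (if t * s \<le> m then (A ^^ t) (G (m - t * s)) else 0)"
proof (induct t arbitrary: m)
  case (Suc t)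
  then show ?case
    by (auto simp: shift_op_def additive.zero[OF assms] diff_diff_add add.commute)
qed simp

lemma funpow_sum_shift_op_unit_seq:
  fixes A :: "'j \<Rightarrow> 'b::ab_group_add \<Rightarrow> 'b" and s :: "'j \<Rightarrow> nat"
  assumes "finite J" and additive: "\<And>j. additive (A j)"
    and comm: "\<And>i j x. A i (A j x) = A j (A i x)"
    and "prime p" and char: "\<And>u::'b. nsmul p u = 0"
  shows "((\<lambda>G. \<Sum>j\<in>J. shift_op (s j) (A j) G) ^^ p) (unit_seq e) m
           = (\<Sum>j | j \<in> J \<and> p * s j = m. (A j ^^ p) e)"
proof -
  have "((\<lambda>G. \<Sum>j\<in>J. shift_op (s j) (A j) G) ^^ p) (unit_seq e)
      = (\<Sum>j\<in>J. (shift_op (s j) (A j) ^^ p) (unit_seq e))"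
    by (rule funpow_sum_prime[OF \<open>finite J\<close> additive_shift_op[OF additive] _ \<open>prime p\<close>])
      (simp_all add: shift_op_commute additive comm fun_eq_iff nsmul_fun_apply char)
  then have "((\<lambda>G. \<Sum>j\<in>J. shift_op (s j) (A j) G) ^^ p) (unit_seq e) m
      = (\<Sum>j\<in>J. if p * s j = m then (A j ^^ p) e else 0)"
    by (auto simp: sum_fun_apply funpow_shift_op additive unit_seq_def
        additive.zero[OF additive_funpow[OF additive]] intro!: sum.cong)
  then show ?thesis
    by (simp add: sum.inter_filter[OF \<open>finite J\<close>, symmetric] conj_commute)
qed

section \<open>Binomial coefficients and the prime field\<close>

lemma ibinom_altdef:
  "ibinom x k = (if 0 \<le> x then int (nat x choose k) else (-1) ^ k * int (k + nat (- x) - 1 choose k))"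
  using gbinomial_int_binomial[of x k] gbinomial_prod_rev[of x k]
  by (simp add: ibinom_def atLeast0LessThan)

lemma ibinom_neg_upper: "n \<ge> 1 \<Longrightarrow> (-1) ^ i * ibinom (- int n) i = ibinom (int n + int i - 1) i"
  by (simp add: ibinom_altdef nat_diff_distrib' add.commute nat_add_distrib)

lemma ibinom_minus_one_upper: "ibinom (int i - 1) i = (if i = 0 then 1 else 0)"
  by (cases i) (simp_all add: ibinom_altdef)

lemma ibinom_diag: "ibinom (int j) j = 1"
  by (simp add: ibinom_altdef)

lemma of_nat_power_CHAR:
  assumes "prime p" "CHAR('f::field) = p"
  shows "(of_nat k :: 'f) ^ p = of_nat k"
proof (induct k)
  case (Suc k)
  have "(of_nat k + 1 :: 'f) ^ p = of_nat k ^ p + 1 ^ p"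
    by (rule freshmans_dream) (use assms in auto)
  then show ?case
    using Suc by (simp add: add.commute)
qed (use assms prime_gt_0_nat in auto)

lemma of_int_power_CHAR:
  assumes "prime p" "CHAR('f::field) = p"
  shows "(of_int z :: 'f) ^ p = of_int z"
proof (cases "z \<ge> 0")
  case True
  then show ?thesis
    using of_nat_power_CHAR[OF assms, of "nat z"] by simp
next
  case False
  then have "(of_int z :: 'f) = - of_nat (nat (- z))"
    by simp
  then show ?thesis
    using minus_power_prime_CHAR[of p "of_nat (nat (- z)) :: 'f"] of_nat_power_CHAR[OF assms] assms
    by simp
qed

lemma minus_one_power_int_power_CHAR:
  assumes "prime p" "CHAR('f::field) = p"
  shows "((-1 :: 'f) powi k) ^ p = (-1) powi k"
proof -
  have "(-1 :: 'f) powi k = of_int ((-1) ^ nat \<bar>k\<bar>)"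
    by (auto simp: power_int_def power_int_minus field_simps)
  then show ?thesis
    using of_int_power_CHAR[OF assms] by metis
qed

section \<open>Fields on a module\<close>

text \<open>A field is given by its modes: \<open>F k w\<close> is the coefficient of \<open>x^(-k-1)\<close> applied to \<open>w\<close>.
  On truncated fields the sums defining \<open>creation_op\<close> and \<open>annihilation_op\<close> below are finite,
  which is why additivity is only claimed there.\<close>

definition truncated :: "(int \<Rightarrow> 'w \<Rightarrow> 'w::zero) set" where
  "truncated = {F. (\<forall>w. \<exists>N. \<forall>k\<ge>N. F k w = 0) \<and> (\<forall>k. F k 0 = 0)}"

lemma truncatedD:
  "F \<in> truncated \<Longrightarrow> \<exists>N. \<forall>k\<ge>N. F k w = 0"
  "F \<in> truncated \<Longrightarrow> F k 0 = 0"
  unfolding truncated_def by auto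

lemma truncated_uniform_bound:
  fixes M :: nat
  assumes "F \<in> truncated"
  shows "\<exists>B. \<forall>j<M. \<forall>k\<ge>B. F k (v j) = 0"
proof (induct M)
  case (Suc M)
  then obtain B where "\<forall>j<M. \<forall>k\<ge>B. F k (v j) = 0" ..
  moreover obtain N where "\<forall>k\<ge>N. F k (v M) = 0"
    using truncatedD(1)[OF assms] ..
  ultimately show ?case
    by (intro exI[of _ "max B N"]) (auto simp: less_Suc_eq)
qed simp

lemma zero_truncated: "0 \<in> truncated"
  unfolding truncated_def by auto

lemma add_truncated:
  fixes F G :: "int \<Rightarrow> 'w \<Rightarrow> 'w::monoid_add"
  assumes "F \<in> truncated" "G \<in> truncated"
  shows "F + G \<in> truncated"
proof -
  have "\<exists>N. \<forall>k\<ge>N. (F + G) k w = 0" for w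
  proof -
    obtain N1 N2 where "\<forall>k\<ge>N1. F k w = 0" "\<forall>k\<ge>N2. G k w = 0"
      using truncatedD(1)[OF assms(1)] truncatedD(1)[OF assms(2)] by metis
    then show ?thesis
      by (intro exI[of _ "max N1 N2"]) auto
  qed
  then show ?thesis
    using assms unfolding truncated_def by auto
qed

lemma fin_sum_eq_sum_lessThan:
  assumes "\<And>i. i \<ge> N \<Longrightarrow> f i = 0"
  shows "fin_sum f = (\<Sum>i<N. f i)"
  unfolding fin_sum_def
  by (rule sum.mono_neutral_left) (use assms not_less in auto)

sublocale va_module \<subseteq> W: vector_space_pair smulW smulW
  by (simp add: vector_space_pair_def vsW)

context va_module
begin

lemmas YW_add = W.linear_add[OF YW_linear_right]
  and YW_scale = W.linear_scale[OF YW_linear_right]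
  and YW_zero [simp] = W.linear_0[OF YW_linear_right]

lemma funpow_YW_scale: "(YW u k ^^ t) (smulW c x) = smulW c ((YW u k ^^ t) x)"
  by (induct t) (auto simp: YW_scale)

lemma nsmul_eq_smulW: "nsmul k x = smulW (of_nat k) x"
  by (induct k) (auto simp: nsmul_Suc W.vs1.scale_left_distrib)

lemma YW_truncated: "YW u \<in> truncated"
  unfolding truncated_def using truncationW by auto

end

section \<open>The two halves of a negative mode\<close>

locale va_module_commuting_modes = va_module smul vac Y smulW YW
  for smul :: "'f::field \<Rightarrow> 'v::ab_group_add \<Rightarrow> 'v" and vac :: 'v and Y :: "'v \<Rightarrow> int \<Rightarrow> 'v \<Rightarrow> 'v"
    and smulW :: "'f \<Rightarrow> 'w::ab_group_add \<Rightarrow> 'w" and YW :: "'v \<Rightarrow> int \<Rightarrow> 'w \<Rightarrow> 'w" +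
  fixes p :: nat and a :: 'v
  assumes prime: "prime p" and char: "CHAR('f) = p"
    and nonneg_modes_commute: "\<And>i j. i \<ge> 0 \<Longrightarrow> j \<ge> 0 \<Longrightarrow> YW a i \<circ> YW a j = YW a j \<circ> YW a i"
    and neg_modes_commute: "\<And>i j. i < 0 \<Longrightarrow> j < 0 \<Longrightarrow> YW a i \<circ> YW a j = YW a j \<circ> YW a i"
begin

lemma nsmul_prime_eq_0: "nsmul p (x :: 'w) = 0"
  using of_nat_CHAR[where 'a = 'f] by (simp add: nsmul_eq_smulW char)

lemma nonneg_modes_vanish: "\<exists>M. \<forall>i\<ge>M. YW a (int i) w = 0"
proof -
  obtain N where "\<forall>n\<ge>N. YW a n w = 0"
    using truncationW by blast
  then show ?thesis
    by (intro exI[of _ "nat N"]) auto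
qed

definition creation_coeff :: "nat \<Rightarrow> nat \<Rightarrow> 'f" where
  "creation_coeff n i = of_int (ibinom (int n + int i - 1) i)"

definition annihilation_coeff :: "nat \<Rightarrow> nat \<Rightarrow> 'f" where
  "annihilation_coeff n i = (-1) powi (1 - int n) * creation_coeff n i"

definition creation_term :: "nat \<Rightarrow> nat \<Rightarrow> 'w \<Rightarrow> 'w" where
  "creation_term n i x = smulW (creation_coeff n i) (YW a (- int n - int i) x)"

definition annihilation_term :: "nat \<Rightarrow> nat \<Rightarrow> ('w \<Rightarrow> 'w) \<Rightarrow> 'w \<Rightarrow> 'w" where
  "annihilation_term n i H w = smulW (annihilation_coeff n i) (H (YW a (int i) w))"

definition creation_op :: "nat \<Rightarrow> (int \<Rightarrow> 'w \<Rightarrow> 'w) \<Rightarrow> int \<Rightarrow> 'w \<Rightarrow> 'w" where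
  "creation_op n F k w = fin_sum (\<lambda>i. creation_term n i (F (k + int i) w))"

definition annihilation_op :: "nat \<Rightarrow> (int \<Rightarrow> 'w \<Rightarrow> 'w) \<Rightarrow> int \<Rightarrow> 'w \<Rightarrow> 'w" where
  "annihilation_op n F k w = fin_sum (\<lambda>i. annihilation_term n i (F (k - int n - int i)) w)"

lemma creation_coeff_eq: "n \<ge> 1 \<Longrightarrow> (-1) ^ i * of_int (ibinom (- int n) i) = creation_coeff n i"
  by (metis creation_coeff_def ibinom_neg_upper of_int_minus of_int_mult of_int_1 of_int_power)

lemma annihilation_coeff_eq: "annihilation_coeff n i = - (creation_coeff n i * (-1) powi (- int n))"
proof -
  have "(-1 :: 'f) powi (1 - int n) = (-1) powi 1 * (-1) powi (- int n)"
    by (subst power_int_add[symmetric]) auto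
  then show ?thesis
    by (simp add: annihilation_coeff_def)
qed

lemma creation_coeff_power_CHAR: "creation_coeff n i ^ p = creation_coeff n i"
  unfolding creation_coeff_def by (rule of_int_power_CHAR[OF prime char])

lemma annihilation_coeff_power_CHAR: "annihilation_coeff n i ^ p = annihilation_coeff n i"
  unfolding annihilation_coeff_def power_mult_distrib creation_coeff_power_CHAR
    minus_one_power_int_power_CHAR[OF prime char] ..

lemma additive_creation_term: "additive (creation_term n i)"
  by unfold_locales (simp add: creation_term_def YW_add W.vs1.scale_right_distrib)

lemma additive_annihilation_term: "additive (annihilation_term n i)"
  by unfold_locales (simp add: fun_eq_iff annihilation_term_def W.vs1.scale_right_distrib)

lemma creation_term_commute:
  assumes "n \<ge> 1"
  shows "creation_term n i (creation_term n j x) = creation_term n j (creation_term n i x)"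
  using neg_modes_commute[of "- int n - int i" "- int n - int j"] assms
  by (simp add: creation_term_def YW_scale fun_eq_iff mult.commute)

lemma annihilation_term_commute:
  "annihilation_term n i (annihilation_term n j H) = annihilation_term n j (annihilation_term n i H)"
  using nonneg_modes_commute[of "int i" "int j"]
  by (simp add: annihilation_term_def fun_eq_iff mult.commute)

lemma funpow_creation_term:
  "(creation_term n i ^^ t) x = smulW (creation_coeff n i ^ t) ((YW a (- int n - int i) ^^ t) x)"
  by (induct t) (simp_all add: creation_term_def YW_scale funpow_YW_scale mult.commute)

lemma funpow_annihilation_term:
  "(annihilation_term n i ^^ t) H w = smulW (annihilation_coeff n i ^ t) (H ((YW a (int i) ^^ t) w))"
  by (induct t arbitrary: H) (simp_all add: annihilation_term_def funpow_Suc_right funpow_swap1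
      mult.commute del: funpow.simps)

lemma creation_op_eq_sum:
  assumes "\<And>i. i \<ge> N \<Longrightarrow> F (k + int i) w = 0"
  shows "creation_op n F k w = (\<Sum>i<N. creation_term n i (F (k + int i) w))"
  unfolding creation_op_def
  by (rule fin_sum_eq_sum_lessThan) (simp add: assms additive.zero[OF additive_creation_term])

lemma annihilation_op_eq_sum:
  assumes "\<And>i. i \<ge> N \<Longrightarrow> F (k - int n - int i) (YW a (int i) w) = 0"
  shows "annihilation_op n F k w = (\<Sum>i<N. annihilation_term n i (F (k - int n - int i)) w)"
  unfolding annihilation_op_def
  by (rule fin_sum_eq_sum_lessThan) (simp add: assms annihilation_term_def)

lemma additive_on_creation_op: "additive_on truncated (creation_op n)"
proof
  fix F G :: "int \<Rightarrow> 'w \<Rightarrow> 'w"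
  assume F: "F \<in> truncated" and G: "G \<in> truncated"
  show "creation_op n F \<in> truncated"
    unfolding truncated_def
  proof safe
    fix w
    obtain N where N: "\<forall>k\<ge>N. F k w = 0"
      using truncatedD(1)[OF F] ..
    have "creation_op n F k w = 0" if "k \<ge> N" for k
    proof -
      have "F (k + int i) w = 0" for i
        using N that by simp
      then show ?thesis
        by (simp add: creation_op_def fin_sum_def additive.zero[OF additive_creation_term])
    qed
    then show "\<exists>N. \<forall>k\<ge>N. creation_op n F k w = 0"
      by blast
  next
    show "creation_op n F k 0 = 0" for k
      using truncatedD(2)[OF F]
      by (simp add: creation_op_def fin_sum_def additive.zero[OF additive_creation_term])
  qed
  show "creation_op n (F + G) = creation_op n F + creation_op n G"
  proof (intro ext)
    fix k w
    obtain N1 N2 where "\<forall>k\<ge>N1. F k w = 0" "\<forall>k\<ge>N2. G k w = 0"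
      using truncatedD(1)[OF F] truncatedD(1)[OF G] by metis
    then have "F (k + int i) w = 0" "G (k + int i) w = 0" if "i \<ge> nat (max N1 N2 - k)" for i
      using that by auto
    then show "creation_op n (F + G) k w = (creation_op n F + creation_op n G) k w"
      by (simp add: creation_op_eq_sum[of "nat (max N1 N2 - k)"] sum.distrib
          additive.add[OF additive_creation_term])
  qed
qed (auto intro: zero_truncated add_truncated)

lemma additive_on_annihilation_op: "additive_on truncated (annihilation_op n)"
proof
  fix F G :: "int \<Rightarrow> 'w \<Rightarrow> 'w"
  assume F: "F \<in> truncated" and G: "G \<in> truncated"
  show "annihilation_op n F \<in> truncated"
    unfolding truncated_def
  proof safe
    fix w
    obtain M where M: "\<forall>i\<ge>M. YW a (int i) w = 0"
      using nonneg_modes_vanish ..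
    obtain B where B: "\<forall>j<M. \<forall>k\<ge>B. F k (YW a (int j) w) = 0"
      using truncated_uniform_bound[OF F, of M "\<lambda>j. YW a (int j) w"] by blast
    have "annihilation_op n F k w = 0" if "k \<ge> B + int n + int M" for k
    proof -
      have "F (k - int n - int i) (YW a (int i) w) = 0" for i
      proof (cases "i < M")
        case True
        then show ?thesis
          using B that by simp
      next
        case False
        then show ?thesis
          using M truncatedD(2)[OF F] by simp
      qed
      then show ?thesis
        by (simp add: annihilation_op_def annihilation_term_def fin_sum_def)
    qed
    then show "\<exists>N. \<forall>k\<ge>N. annihilation_op n F k w = 0"
      by blast
  next
    show "annihilation_op n F k 0 = 0" for k
      using truncatedD(2)[OF F] by (simp add: annihilation_op_def annihilation_term_def fin_sum_def)
  qed
  show "annihilation_op n (F + G) = annihilation_op n F + annihilation_op n G"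
  proof (intro ext)
    fix k w
    obtain M where "\<forall>i\<ge>M. YW a (int i) w = 0"
      using nonneg_modes_vanish ..
    then have "F (k - int n - int i) (YW a (int i) w) = 0" "G (k - int n - int i) (YW a (int i) w) = 0"
      if "i \<ge> M" for i
      using that truncatedD(2)[OF F] truncatedD(2)[OF G] by auto
    then show "annihilation_op n (F + G) k w = (annihilation_op n F + annihilation_op n G) k w"
      by (simp add: annihilation_op_eq_sum[of M] sum.distrib
          additive.add[OF additive_annihilation_term])
  qed
qed (auto intro: zero_truncated add_truncated)

lemma creation_annihilation_term_commute:
  "creation_term n i (annihilation_term n j H w) = annihilation_term n j (\<lambda>v. creation_term n i (H v)) w"
  by (simp add: creation_term_def annihilation_term_def YW_scale mult.commute)

lemma creation_annihilation_op_commute: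
  assumes F: "F \<in> truncated"
  shows "creation_op n (annihilation_op n F) = annihilation_op n (creation_op n F)"
proof (intro ext)
  fix k w
  obtain M where M: "\<forall>i\<ge>M. YW a (int i) w = 0"
    using nonneg_modes_vanish ..
  obtain B where B: "\<forall>j<M. \<forall>k\<ge>B. F k (YW a (int j) w) = 0"
    using truncated_uniform_bound[OF F, of M "\<lambda>j. YW a (int j) w"] by blast
  define N where "N = nat (B - k + int n + int M)"
  have vanish: "F (k + int i - int n - int j) (YW a (int j) w) = 0" if "i \<ge> N \<or> j \<ge> M" for i j
  proof (cases "j \<ge> M")
    case True
    then show ?thesis
      using M truncatedD(2)[OF F] by simp
  next
    case False
    then show ?thesis
      using that B by (auto simp: N_def)
  qed
  let ?term = "\<lambda>i j. annihilation_term n j (\<lambda>v. creation_term n i (F (k + int i - int n - int j) v)) w"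
  have R: "annihilation_op n F (k + int i) w
      = (\<Sum>j<M. annihilation_term n j (F (k + int i - int n - int j)) w)" for i
    by (rule annihilation_op_eq_sum) (use vanish in auto)
  have L: "creation_op n F (k - int n - int j) (YW a (int j) w)
      = (\<Sum>i<N. creation_term n i (F (k + int i - int n - int j) (YW a (int j) w)))" for j
  proof -
    have "creation_op n F (k - int n - int j) (YW a (int j) w)
        = (\<Sum>i<N. creation_term n i (F (k - int n - int j + int i) (YW a (int j) w)))"
      by (rule creation_op_eq_sum) (use vanish in \<open>auto simp: algebra_simps\<close>)
    then show ?thesis
      by (simp add: algebra_simps)
  qed
  have "creation_op n (annihilation_op n F) k w
      = (\<Sum>i<N. creation_term n i (annihilation_op n F (k + int i) w))"
    by (rule creation_op_eq_sum) (simp add: R vanish annihilation_term_def)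
  also have "\<dots> = (\<Sum>i<N. \<Sum>j<M. ?term i j)"
    by (simp add: R additive.sum[OF additive_creation_term] creation_annihilation_term_commute)
  also have "\<dots> = (\<Sum>j<M. \<Sum>i<N. ?term i j)"
    by (rule sum.swap)
  also have "\<dots> = annihilation_op n (creation_op n F) k w"
    by (simp add: annihilation_op_eq_sum[of M] L M annihilation_term_def W.vs1.scale_sum_right
        truncatedD(2)[OF additive_on.maps_to[OF additive_on_creation_op F]])
  finally show "creation_op n (annihilation_op n F) k w = annihilation_op n (creation_op n F) k w" .
qed

text \<open>The Jacobi identity at \<open>l = -n\<close>, \<open>m = 0\<close>: on its right-hand side only \<open>i = 0\<close> survives,
  because \<open>binom(i - 1, i) = 0\<close> for \<open>i > 0\<close>.\<close>

lemma YW_neg_mode: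
  assumes "n \<ge> 1"
  shows "YW (Y a (- int n) b) = creation_op n (YW b) + annihilation_op n (YW b)"
proof (intro ext)
  fix k w
  obtain N0 where N0: "\<forall>m\<ge>N0. YW b m w = 0"
    using truncationW by blast
  obtain M where M: "\<forall>i\<ge>M. YW a (int i) w = 0"
    using nonneg_modes_vanish ..
  define N where "N = max (nat (N0 - k)) M"
  have vanish: "YW b (k + int i) w = 0" "YW a (int i) w = 0" if "i \<ge> N" for i
    using that N0 M by (auto simp: N_def)
  have term_eq: "smulW ((-1) ^ i * of_int (ibinom (- int n) i))
          (YW a (- int n + 0 - int i) (YW b (k + int i) w)
           - smulW ((-1) powi (- int n)) (YW b (- int n + k - int i) (YW a (0 + int i) w)))
     = creation_term n i (YW b (k + int i) w) + annihilation_term n i (YW b (k - int n - int i)) w"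
    for i
    by (simp add: creation_coeff_eq[OF assms] annihilation_coeff_eq creation_term_def
        annihilation_term_def algebra_simps)
  have "fin_sum (\<lambda>i. smulW ((-1) ^ i * of_int (ibinom (- int n) i))
          (YW a (- int n + 0 - int i) (YW b (k + int i) w)
           - smulW ((-1) powi (- int n)) (YW b (- int n + k - int i) (YW a (0 + int i) w))))
      = fin_sum (\<lambda>i. smulW ((-1) ^ i * of_int (ibinom (int i - 0 - 1) i))
          (YW (Y a (- int n + int i) b) (0 + k - int i) w))"
    (is "?lhs = ?rhs")
    by (rule jacobiW)
  moreover have "?lhs = creation_op n (YW b) k w + annihilation_op n (YW b) k w"
    unfolding term_eq
    by (simp add: fin_sum_eq_sum_lessThan[of N] creation_op_eq_sum[of N] annihilation_op_eq_sum[of N]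
        vanish sum.distrib additive.zero[OF additive_creation_term] annihilation_term_def)
  moreover have "?rhs = YW (Y a (- int n) b) k w"
    by (simp add: fin_sum_eq_sum_lessThan[of 1] ibinom_minus_one_upper)
  ultimately show "YW (Y a (- int n) b) k w = (creation_op n (YW b) + annihilation_op n (YW b)) k w"
    by simp
qed

lemma YW_neg_mode_power:
  assumes "n \<ge> 1"
  shows "YW ((Y a (- int n) ^^ t) vac) = ((\<lambda>F. creation_op n F + annihilation_op n F) ^^ t) (YW vac)"
  by (induct t) (simp_all add: YW_neg_mode[OF assms])

lemma nsmul_prime_fun_eq_0: "nsmul p (F :: int \<Rightarrow> 'w \<Rightarrow> 'w) = 0"
  by (simp add: fun_eq_iff nsmul_fun_apply nsmul_prime_eq_0)

lemma YW_neg_mode_prime_power: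
  assumes "n \<ge> 1"
  shows "YW ((Y a (- int n) ^^ p) vac) = (creation_op n ^^ p) (YW vac) + (annihilation_op n ^^ p) (YW vac)"
  unfolding YW_neg_mode_power[OF assms]
  using additive_on_creation_op additive_on_annihilation_op creation_annihilation_op_commute
    YW_truncated prime nsmul_prime_fun_eq_0
  by (rule funpow_add_prime)

lemma creation_op_power_nonneg: "k \<ge> 0 \<Longrightarrow> (creation_op n ^^ t) (YW vac) k w = 0"
proof (induct t arbitrary: k w)
  case (Suc t)
  then show ?case
    by (simp add: creation_op_def fin_sum_def additive.zero[OF additive_creation_term])
qed (simp add: vacuumW)

lemma creation_op_power_eq_shift_op:
  assumes "m \<le> M"
  shows "(creation_op n ^^ t) (YW vac) (- int m - 1) w
       = ((\<lambda>G. \<Sum>j\<le>M. shift_op j (creation_term n j) G) ^^ t) (unit_seq w) m"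
  using assms
proof (induct t arbitrary: m)
  case 0
  then show ?case
    by (simp add: vacuumW unit_seq_def)
next
  case (Suc t)
  define G where "G = ((\<lambda>G. \<Sum>j\<le>M. shift_op j (creation_term n j) G) ^^ t) (unit_seq w)"
  have "(creation_op n ^^ Suc t) (YW vac) (- int m - 1) w
      = (\<Sum>i<Suc m. creation_term n i ((creation_op n ^^ t) (YW vac) (- int m - 1 + int i) w))"
    unfolding funpow.simps comp_apply
    by (rule creation_op_eq_sum) (simp add: creation_op_power_nonneg)
  also have "\<dots> = (\<Sum>i\<le>m. creation_term n i (G (m - i)))"
  proof (rule sum.cong)
    fix i assume "i \<in> {..m}"
    then have "- int m - 1 + int i = - int (m - i) - 1" "m - i \<le> M"
      using Suc.prems by auto
    then show "creation_term n i ((creation_op n ^^ t) (YW vac) (- int m - 1 + int i) w)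
        = creation_term n i (G (m - i))"
      by (simp only: Suc.hyps G_def)
  qed (auto simp: lessThan_Suc_atMost)
  also have "\<dots> = (\<Sum>j\<le>M. shift_op j (creation_term n j) G m)"
    unfolding shift_op_def by (rule sum.mono_neutral_cong_left) (use Suc.prems in auto)
  also have "\<dots> = (\<Sum>j\<le>M. shift_op j (creation_term n j) G) m"
    by (simp only: sum_fun_apply)
  finally show ?case
    by (simp only: G_def funpow.simps comp_apply)
qed

lemma annihilation_op_power_below: "k < -1 \<Longrightarrow> (annihilation_op n ^^ t) (YW vac) k w = 0"
proof (induct t arbitrary: k w)
  case (Suc t)
  then show ?case
    by (simp add: annihilation_op_def annihilation_term_def fin_sum_def)
qed (simp add: vacuumW)

lemma annihilation_op_power_eq_shift_op:
  assumes "r \<le> M"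
  shows "(annihilation_op n ^^ t) (YW vac) (int r - 1) w
       = ((\<lambda>H. \<Sum>j\<le>M. shift_op (n + j) (annihilation_term n j) H) ^^ t) (unit_seq id) r w"
  using assms
proof (induct t arbitrary: r w)
  case 0
  then show ?case
    by (simp add: vacuumW unit_seq_def)
next
  case (Suc t)
  define H where "H = ((\<lambda>H. \<Sum>j\<le>M. shift_op (n + j) (annihilation_term n j) H) ^^ t) (unit_seq id)"
  have "(annihilation_op n ^^ Suc t) (YW vac) (int r - 1) w
      = (\<Sum>i<Suc r. annihilation_term n i ((annihilation_op n ^^ t) (YW vac) (int r - 1 - int n - int i)) w)"
    unfolding funpow.simps comp_apply
    by (rule annihilation_op_eq_sum) (simp add: annihilation_op_power_below)
  also have "\<dots> = (\<Sum>i\<le>r. shift_op (n + i) (annihilation_term n i) H r w)"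
  proof (rule sum.cong)
    fix i assume "i \<in> {..r}"
    show "annihilation_term n i ((annihilation_op n ^^ t) (YW vac) (int r - 1 - int n - int i)) w
        = shift_op (n + i) (annihilation_term n i) H r w"
    proof (cases "n + i \<le> r")
      case True
      then have "int r - 1 - int n - int i = int (r - n - i) - 1" "r - n - i \<le> M"
        using Suc.prems by auto
      then have "(annihilation_op n ^^ t) (YW vac) (int r - 1 - int n - int i) = H (r - n - i)"
        unfolding H_def by (intro ext) (simp only: Suc.hyps)
      then show ?thesis
        using True by (simp add: shift_op_def)
    next
      case False
      then show ?thesis
        by (simp add: shift_op_def annihilation_term_def annihilation_op_power_below)
    qed
  qed (auto simp: lessThan_Suc_atMost)
  also have "\<dots> = (\<Sum>j\<le>M. shift_op (n + j) (annihilation_term n j) H r w)"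
    by (rule sum.mono_neutral_left) (use Suc.prems in \<open>auto simp: shift_op_def\<close>)
  also have "\<dots> = (\<Sum>j\<le>M. shift_op (n + j) (annihilation_term n j) H) r w"
    by (simp only: sum_fun_apply)
  finally show ?case
    by (simp only: H_def funpow.simps comp_apply)
qed

lemma creation_op_prime_power_coeff:
  assumes "n \<ge> 1"
  shows "(creation_op n ^^ p) (YW vac) (- m - 1) w
       = series_coeff (\<lambda>j::nat. int j * int p)
           (\<lambda>j. smulW (creation_coeff n j) ((YW a (- int n - int j) ^^ p) w)) m"
proof (cases "m < 0")
  case True
  then have "{j. int j * int p = m} = {}"
    by (auto simp flip: of_nat_mult)
  then show ?thesis
    using True by (simp add: series_coeff_def creation_op_power_nonneg)
next
  case False
  then obtain r where m: "m = int r"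
    by (metis nonneg_int_cases not_less)
  have "(creation_op n ^^ p) (YW vac) (- m - 1) w
      = ((\<lambda>G. \<Sum>j\<le>r. shift_op j (creation_term n j) G) ^^ p) (unit_seq w) r"
    unfolding m by (rule creation_op_power_eq_shift_op) simp
  also have "\<dots> = (\<Sum>j | j \<in> {..r} \<and> p * j = r. (creation_term n j ^^ p) w)"
    by (rule funpow_sum_shift_op_unit_seq)
      (simp_all add: additive_creation_term creation_term_commute[OF assms] prime nsmul_prime_eq_0)
  also have "{j. j \<in> {..r} \<and> p * j = r} = {j. int j * int p = m}"
    using prime_gt_0_nat[OF prime] by (auto simp: m mult.commute simp flip: of_nat_mult)
  finally show ?thesis
    by (simp add: series_coeff_def funpow_creation_term creation_coeff_power_CHAR)
qed

lemma annihilation_op_prime_power_coeff: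
  "(annihilation_op n ^^ p) (YW vac) (- m - 1) w
     = series_coeff (\<lambda>j::nat. - (int p * (int n + int j)))
         (\<lambda>j. smulW (annihilation_coeff n j) ((YW a (int j) ^^ p) w)) m"
proof (cases "m > 0")
  case True
  then have "{j. - (int p * (int n + int j)) = m} = {}"
    by (auto simp flip: of_nat_mult of_nat_add)
  then show ?thesis
    using True by (simp add: series_coeff_def annihilation_op_power_below)
next
  case False
  then obtain r where m: "m = - int r"
    by (metis minus_minus neg_0_le_iff_le nonneg_int_cases not_less)
  have "(annihilation_op n ^^ p) (YW vac) (- m - 1) w
      = ((\<lambda>H. \<Sum>j\<le>r. shift_op (n + j) (annihilation_term n j) H) ^^ p) (unit_seq id) r w"
    unfolding m using annihilation_op_power_eq_shift_op[of r r] by simp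
  also have "\<dots> = (\<Sum>j | j \<in> {..r} \<and> p * (n + j) = r. (annihilation_term n j ^^ p) id) w"
    by (subst funpow_sum_shift_op_unit_seq)
      (simp_all add: additive_annihilation_term annihilation_term_commute prime fun_eq_iff
        nsmul_fun_apply nsmul_prime_eq_0)
  also have "{j. j \<in> {..r} \<and> p * (n + j) = r} = {j. - (int p * (int n + int j)) = m}"
  proof -
    have "j \<le> p * (n + j)" for j
      using prime_gt_0_nat[OF prime] by (cases p) auto
    then show ?thesis
      by (auto simp: m simp flip: of_nat_mult of_nat_add)
  qed
  finally show ?thesis
    by (simp add: series_coeff_def sum_fun_apply funpow_annihilation_term annihilation_coeff_power_CHAR)
qed

lemma YW_neg_mode_prime_power_coeff:
  assumes "n \<ge> 1"
  shows "YW ((Y a (- int n) ^^ p) vac) (- m - 1) w =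
           series_coeff (\<lambda>j::nat. int j * int p)
             (\<lambda>j. smulW (of_int (ibinom (int n + int j - 1) j)) ((YW a (- int n - int j) ^^ p) w)) m
         + series_coeff (\<lambda>j::nat. - (int p * (int n + int j)))
             (\<lambda>j. smulW ((-1) powi (1 - int n) * of_int (ibinom (int n + int j - 1) j))
                     ((YW a (int j) ^^ p) w)) m"
  using creation_op_prime_power_coeff[OF assms] annihilation_op_prime_power_coeff
  unfolding YW_neg_mode_prime_power[OF assms] annihilation_coeff_def creation_coeff_def
  by simp

end

lemma series_coeff_neg_index_part:
  assumes "p > 0" "m \<ge> 0"
  shows "series_coeff (\<lambda>j::int. - (int p * (j + 1))) f m
       = series_coeff (\<lambda>j::nat. int j * int p) (\<lambda>j. f (-1 - int j)) m"
  unfolding series_coeff_def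
proof (rule sym, rule sum.reindex_bij_witness[of _ "\<lambda>i. nat (-1 - i)" "\<lambda>j. -1 - int j"])
  fix i :: int
  assume "i \<in> {i. - (int p * (i + 1)) = m}"
  then have i: "- (int p * (i + 1)) = m"
    by simp
  then have "int p * (i + 1) \<le> 0"
    using assms(2) by linarith
  then have "i + 1 \<le> 0"
    using assms(1) by (simp add: mult_le_0_iff)
  then show "-1 - int (nat (-1 - i)) = i" "nat (-1 - i) \<in> {j. int j * int p = m}"
    using i by (simp_all add: algebra_simps)
next
  fix j :: nat
  assume "j \<in> {j. int j * int p = m}"
  then show "-1 - int j \<in> {i. - (int p * (i + 1)) = m}"
    by (simp add: algebra_simps)
qed simp_all

lemma series_coeff_nonneg_index_part:
  assumes "p > 0" "m < 0"
  shows "series_coeff (\<lambda>j::int. - (int p * (j + 1))) f m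
       = series_coeff (\<lambda>j::nat. - (int p * (1 + int j))) (\<lambda>j. f (int j)) m"
  unfolding series_coeff_def
proof (rule sym, rule sum.reindex_bij_witness[of _ nat int])
  fix i :: int
  assume "i \<in> {i. - (int p * (i + 1)) = m}"
  then have i: "- (int p * (i + 1)) = m"
    by simp
  then have "int p * (i + 1) > 0"
    using assms(2) by linarith
  then have "i + 1 > 0"
    using assms(1) by (simp add: zero_less_mult_iff)
  then show "int (nat i) = i" "nat i \<in> {j. - (int p * (1 + int j)) = m}"
    using i by (simp_all add: algebra_simps)
next
  fix j :: nat
  assume "j \<in> {j. - (int p * (1 + int j)) = m}"
  then show "int j \<in> {i. - (int p * (i + 1)) = m}"
    by (simp add: algebra_simps)
qed simp_all

lemma series_coeff_split_sign:
  fixes f :: "int \<Rightarrow> 'a::comm_monoid_add"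
  assumes "p > 0"
  shows "series_coeff (\<lambda>j::nat. int j * int p) (\<lambda>j. f (-1 - int j)) m
       + series_coeff (\<lambda>j::nat. - (int p * (1 + int j))) (\<lambda>j. f (int j)) m
       = series_coeff (\<lambda>j::int. - (int p * (j + 1))) f m"
proof (cases "m \<ge> 0")
  case True
  have "- (int p * (1 + int j)) \<noteq> m" for j
  proof -
    have "int p * (1 + int j) > 0"
      using assms by simp
    then show ?thesis
      using True by linarith
  qed
  then show ?thesis
    unfolding series_coeff_neg_index_part[OF assms True] by (simp add: series_coeff_def)
next
  case False
  then have "m < 0"
    by simp
  then have "int j * int p \<noteq> m" for j
    by (metis of_nat_0_le_iff of_nat_mult not_less)
  then show ?thesis
    unfolding series_coeff_nonneg_index_part[OF assms \<open>m < 0\<close>] by (simp add: series_coeff_def)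
qed

context va_module_commuting_modes
begin

lemma YW_minus_one_mode_prime_power_coeff:
  "YW ((Y a (-1) ^^ p) vac) (- m - 1) w = series_coeff (\<lambda>j::int. - (int p * (j + 1))) (\<lambda>j. (YW a j ^^ p) w) m"
proof -
  have "YW ((Y a (-1) ^^ p) vac) (- m - 1) w =
      series_coeff (\<lambda>j::nat. int j * int p) (\<lambda>j. (YW a (-1 - int j) ^^ p) w) m
    + series_coeff (\<lambda>j::nat. - (int p * (1 + int j))) (\<lambda>j. (YW a (int j) ^^ p) w) m"
    using YW_neg_mode_prime_power_coeff[of 1 m w] by (simp add: ibinom_diag)
  also have "\<dots> = series_coeff (\<lambda>j::int. - (int p * (j + 1))) (\<lambda>j. (YW a j ^^ p) w) m"
    by (rule series_coeff_split_sign[OF prime_gt_0_nat[OF prime]])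
  finally show ?thesis .
qed

end

theorem lemma5:
  fixes smul :: "'f::field \<Rightarrow> 'v::ab_group_add \<Rightarrow> 'v"
    and vac :: 'v and Y :: "'v \<Rightarrow> int \<Rightarrow> 'v \<Rightarrow> 'v"
    and smulW :: "'f \<Rightarrow> 'w::ab_group_add \<Rightarrow> 'w"
    and YW :: "'v \<Rightarrow> int \<Rightarrow> 'w \<Rightarrow> 'w"
    and p :: nat and a :: 'v
  assumes "prime p" and "CHAR('f) = p"
    and "va_module smul vac Y smulW YW"
    and "\<And>i j. i \<ge> 0 \<Longrightarrow> j \<ge> 0 \<Longrightarrow> YW a i \<circ> YW a j = YW a j \<circ> YW a i"
    and "\<And>i j. i < 0 \<Longrightarrow> j < 0 \<Longrightarrow> YW a i \<circ> YW a j = YW a j \<circ> YW a i"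
  shows "(\<forall>n::nat. n \<ge> 1 \<longrightarrow> (\<forall>m w.
            YW ((Y a (- int n) ^^ p) vac) (- m - 1) w =
              series_coeff (\<lambda>j::nat. int j * int p)
                (\<lambda>j. smulW (of_int (ibinom (int n + int j - 1) j))
                        ((YW a (- int n - int j) ^^ p) w)) m
            + series_coeff (\<lambda>j::nat. - (int p * (int n + int j)))
                (\<lambda>j. smulW ((-1) powi (1 - int n) * of_int (ibinom (int n + int j - 1) j))
                        ((YW a (int j) ^^ p) w)) m))
       \<and> (\<forall>m w. YW ((Y a (-1) ^^ p) vac) (- m - 1) w =
              series_coeff (\<lambda>j::int. - (int p * (j + 1))) (\<lambda>j. (YW a j ^^ p) w) m)"
proof -
  interpret va_module_commuting_modes smul vac Y smulW YW p a
    using assms by (simp add: va_module_commuting_modes_def va_module_commuting_modes_axioms_def)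
  show ?thesis
    using YW_neg_mode_prime_power_coeff YW_minus_one_mode_prime_power_coeff by blast
qed

end
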